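(* Let $(X,\mathcal T,P,\leq,\{\sigma_x:x\in X\})$ be a typed topological space with $X$ finite. For any subset $D\subseteq X$ and any type $p\in P$ there exists a subset $port_p(D)\subseteq D$ such that (1) $D\subseteq p\vdash tr(port_p(D))$, and (2) for every two distinct points $z,w\in port_p(D)$, both $z\notin p\vdash tr(\{w\})$ and $w\notin p\vdash tr(\{z\})$.
   Context: A typed topological space $(X,\mathcal T,P,\leq,\{\sigma_x:x\in X\})$ consists of a topological space $(X,\mathcal T)$, a partially ordered set $(P,\leq)$ of types, and for each $x\in X$ a partial function $\sigma_x:\{O\in\mathcal T:x\in O\}\to P$ such that for all $U,V$ in its domain, $\sigma_x(U)\leq\sigma_x(V)$ iff $U\subseteq V$. $U$ is a type-$p$ neighborhood of $x$ if $U$ is in the domain of $\sigma_x$ and $\sigma_x(U)=p$. $x$ is a $p$-accumulation point of $A$ if every type-$p$ neighborhood of $x$ meets $A$. $p\vdash CL_1(A)=A\cup\{p\text{-accumulation points of }A\}$, $p\vdash CL_n(A)=p\vdash CL_1(p\vdash CL_{n-1}(A))$, $p\vdash tr(A)=\bigcup_{n\ge1}p\vdash CL_n(A)$. *)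

theory Defs
  imports "HOL-Analysis.Analysis"
begin

text \<open>A typed topological space: topology T on X = topspace T, the poset of types is the
  type 'p with its partial order, and sigma x is a partial function (option-valued) from
  the open neighbourhoods of x to types, order-reflecting w.r.t. inclusion.\<close>

definition typed_top_space :: "'a topology \<Rightarrow> ('a \<Rightarrow> 'a set \<Rightarrow> 'p::order option) \<Rightarrow> bool" where
  "typed_top_space T \<sigma> \<longleftrightarrow>
     (\<forall>x \<in> topspace T. \<forall>U p. \<sigma> x U = Some p \<longrightarrow> openin T U \<and> x \<in> U) \<and>
     (\<forall>x \<in> topspace T. \<forall>U V p q. \<sigma> x U = Some p \<longrightarrow> \<sigma> x V = Some q \<longrightarrow> (p \<le> q \<longleftrightarrow> U \<subseteq> V))"

definition p_accumulation_point ::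
  "'a topology \<Rightarrow> ('a \<Rightarrow> 'a set \<Rightarrow> 'p option) \<Rightarrow> 'p \<Rightarrow> 'a set \<Rightarrow> 'a \<Rightarrow> bool" where
  "p_accumulation_point T \<sigma> p A x \<longleftrightarrow>
     x \<in> topspace T \<and> (\<forall>U. \<sigma> x U = Some p \<longrightarrow> U \<inter> A \<noteq> {})"

definition CL1 :: "'a topology \<Rightarrow> ('a \<Rightarrow> 'a set \<Rightarrow> 'p option) \<Rightarrow> 'p \<Rightarrow> 'a set \<Rightarrow> 'a set" where
  "CL1 T \<sigma> p A = A \<union> {x. p_accumulation_point T \<sigma> p A x}"

definition CLn :: "'a topology \<Rightarrow> ('a \<Rightarrow> 'a set \<Rightarrow> 'p option) \<Rightarrow> 'p \<Rightarrow> nat \<Rightarrow> 'a set \<Rightarrow> 'a set" where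
  "CLn T \<sigma> p n A = (CL1 T \<sigma> p ^^ n) A"

definition ptr :: "'a topology \<Rightarrow> ('a \<Rightarrow> 'a set \<Rightarrow> 'p option) \<Rightarrow> 'p \<Rightarrow> 'a set \<Rightarrow> 'a set" where
  "ptr T \<sigma> p A = (\<Union>n \<in> {1..}. CLn T \<sigma> p n A)"

end

theory Submission
  imports Defs
begin

text \<open>Since \<open>\<sigma>\<^sub>x\<close> reflects the order, a point has at most one type-\<open>p\<close> neighbourhood.
  Hence a \<open>p\<close>-accumulation point of a union is a \<open>p\<close>-accumulation point of one of its
  members, which makes \<open>p \<turnstile> tr\<close> idempotent, so a closure operator. For any closure operator,
  an inclusion-minimal subset of the finite set \<open>D\<close> whose closure covers \<open>D\<close> is irredundant:
  no point of it lies in the closure of the others, in particular not in the closure of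
  a single other point.\<close>

lemma typed_top_space_nbhd_unique:
  assumes "typed_top_space T \<sigma>" "x \<in> topspace T" "\<sigma> x U = Some p" "\<sigma> x V = Some p"
  shows "U = V"
  using assms unfolding typed_top_space_def by (metis order_refl subset_antisym)

lemma p_accumulation_point_UN:
  assumes "typed_top_space T \<sigma>" "I \<noteq> {}"
    and "p_accumulation_point T \<sigma> p (\<Union>i\<in>I. A i) x"
  shows "\<exists>i\<in>I. p_accumulation_point T \<sigma> p (A i) x"
proof (cases "\<exists>U. \<sigma> x U = Some p")
  case True
  then obtain U where U: "\<sigma> x U = Some p" by blast
  with assms(3) obtain i where "i \<in> I" "U \<inter> A i \<noteq> {}"
    unfolding p_accumulation_point_def by blast
  with U assms(1,3) show ?thesis
    unfolding p_accumulation_point_def by (metis typed_top_space_nbhd_unique)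
next
  case False
  with assms(2,3) show ?thesis unfolding p_accumulation_point_def by blast
qed

lemma CLn_0 [simp]: "CLn T \<sigma> p 0 A = A"
  by (simp add: CLn_def)

lemma CLn_Suc [simp]: "CLn T \<sigma> p (Suc n) A = CL1 T \<sigma> p (CLn T \<sigma> p n A)"
  by (simp add: CLn_def)

lemma CL1_mono: "A \<subseteq> B \<Longrightarrow> CL1 T \<sigma> p A \<subseteq> CL1 T \<sigma> p B"
  unfolding CL1_def p_accumulation_point_def by blast

lemma CLn_mono: "A \<subseteq> B \<Longrightarrow> CLn T \<sigma> p n A \<subseteq> CLn T \<sigma> p n B"
  by (induction n) (simp_all add: CL1_mono)

lemma ptr_mono: "mono (ptr T \<sigma> p)"
  unfolding ptr_def by (intro monoI UN_mono CLn_mono) auto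

lemma CLn_subset_ptr: "n \<ge> 1 \<Longrightarrow> CLn T \<sigma> p n A \<subseteq> ptr T \<sigma> p A"
  unfolding ptr_def by auto

lemma subset_ptr: "A \<subseteq> ptr T \<sigma> p A"
  using CLn_subset_ptr[of 1 T \<sigma> p A] by (simp add: CL1_def)

lemma CL1_ptr_subset:
  assumes "typed_top_space T \<sigma>"
  shows "CL1 T \<sigma> p (ptr T \<sigma> p A) \<subseteq> ptr T \<sigma> p A"
proof
  fix x assume "x \<in> CL1 T \<sigma> p (ptr T \<sigma> p A)"
  then consider "x \<in> ptr T \<sigma> p A" | "p_accumulation_point T \<sigma> p (ptr T \<sigma> p A) x"
    unfolding CL1_def by blast
  then show "x \<in> ptr T \<sigma> p A"
  proof cases
    case 1
    then show ?thesis .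
  next
    case 2
    have "{1::nat..} \<noteq> {}" by auto
    with 2 obtain n where "n \<ge> 1" "p_accumulation_point T \<sigma> p (CLn T \<sigma> p n A) x"
      unfolding ptr_def by (metis p_accumulation_point_UN[OF assms] atLeast_iff)
    then have "x \<in> CLn T \<sigma> p (Suc n) A" by (simp add: CL1_def)
    then show ?thesis using CLn_subset_ptr[of "Suc n" T \<sigma> p A] by auto
  qed
qed

lemma ptr_ptr_subset:
  assumes "typed_top_space T \<sigma>"
  shows "ptr T \<sigma> p (ptr T \<sigma> p A) \<subseteq> ptr T \<sigma> p A"
proof -
  have CLn_ptr: "CLn T \<sigma> p n (ptr T \<sigma> p A) \<subseteq> ptr T \<sigma> p A" for n
  proof (induction n)
    case (Suc n)
    then have "CLn T \<sigma> p (Suc n) (ptr T \<sigma> p A) \<subseteq> CL1 T \<sigma> p (ptr T \<sigma> p A)"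
      by (simp add: CL1_mono)
    also have "\<dots> \<subseteq> ptr T \<sigma> p A" using assms by (rule CL1_ptr_subset)
    finally show ?case .
  qed simp
  show ?thesis unfolding ptr_def[of T \<sigma> p "ptr T \<sigma> p A"] by (intro UN_least CLn_ptr)
qed

lemma finite_irredundant_generating_subset:
  fixes cl :: "'a set \<Rightarrow> 'a set"
  assumes "finite D" "mono cl"
    and extensive: "\<And>A. A \<subseteq> cl A" and idem: "\<And>A. cl (cl A) \<subseteq> cl A"
  shows "\<exists>S \<subseteq> D. D \<subseteq> cl S \<and> (\<forall>z \<in> S. z \<notin> cl (S - {z}))"
proof -
  let ?G = "{S. S \<subseteq> D \<and> D \<subseteq> cl S}"
  have "finite ?G" using \<open>finite D\<close> by (intro finite_subset[of ?G "Pow D"]) auto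
  moreover have "D \<in> ?G" using extensive by blast
  ultimately obtain S where S: "S \<in> ?G" and minimal: "\<forall>S' \<in> ?G. S' \<subseteq> S \<longrightarrow> S = S'"
    by (meson finite_has_minimal2)
  have "z \<notin> cl (S - {z})" if "z \<in> S" for z
  proof
    assume "z \<in> cl (S - {z})"
    then have "S \<subseteq> cl (S - {z})" using extensive[of "S - {z}"] by blast
    then have "cl S \<subseteq> cl (S - {z})" using \<open>mono cl\<close> idem by (meson monoD order_trans)
    then have "S - {z} \<in> ?G" using S by blast
    then show False using minimal \<open>z \<in> S\<close> by blast
  qed
  then show ?thesis using S by blast
qed

theorem lemma3p5:
  fixes T :: "'a topology" and \<sigma> :: "'a \<Rightarrow> 'a set \<Rightarrow> 'p::order option"
  assumes "typed_top_space T \<sigma>"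
    and "finite (topspace T)"
    and "D \<subseteq> topspace T"
  shows "\<exists>port \<subseteq> D. D \<subseteq> ptr T \<sigma> p port \<and>
           (\<forall>z \<in> port. \<forall>w \<in> port. z \<noteq> w \<longrightarrow>
              z \<notin> ptr T \<sigma> p {w} \<and> w \<notin> ptr T \<sigma> p {z})"
proof -
  have "finite D" using assms(2,3) by (rule finite_subset[rotated])
  then obtain port where port: "port \<subseteq> D" "D \<subseteq> ptr T \<sigma> p port"
    and irredundant: "\<And>z. z \<in> port \<Longrightarrow> z \<notin> ptr T \<sigma> p (port - {z})"
    using finite_irredundant_generating_subset[of D "ptr T \<sigma> p", OF _ ptr_mono subset_ptr
        ptr_ptr_subset[OF assms(1)]]
    by blast
  have "z \<notin> ptr T \<sigma> p {w}" if "z \<in> port" "w \<in> port" "z \<noteq> w" for z w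
    using irredundant[OF \<open>z \<in> port\<close>] monoD[OF ptr_mono[of T \<sigma> p], of "{w}" "port - {z}"] that by blast
  then show ?thesis using port by blast
qed

end
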